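(* For all integers $k\geq 2$ and $w\geq 2$, there exists a finite poset $P$ of width $w$ that does not contain $\mathbf{k}+\mathbf{k}$ as an induced subposet, and an ordering of the elements of $P$ such that First-Fit, presented with the elements in this order, uses at least $(k-1)(w-1)$ chains.
   Context: The width of a poset is the maximum size of an antichain. $\mathbf{k}+\mathbf{k}$ denotes the poset consisting of two disjoint chains $A,B$ with $|A|=|B|=k$ in which every element of $A$ is incomparable with every element of $B$. The First-Fit algorithm receives the elements of $P$ one at a time in some order and puts each new element $v$ into the first chain of the current chain partition all of whose elements are comparable to $v$, opening a new chain at the end of the partition if there is none. *)

theory Defs
  imports Main
begin

definition poset_on :: "'a set \<Rightarrow> ('a \<Rightarrow> 'a \<Rightarrow> bool) \<Rightarrow> bool" where
  "poset_on P le \<longleftrightarrow>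
     (\<forall>x\<in>P. le x x) \<and>
     (\<forall>x\<in>P. \<forall>y\<in>P. le x y \<and> le y x \<longrightarrow> x = y) \<and>
     (\<forall>x\<in>P. \<forall>y\<in>P. \<forall>z\<in>P. le x y \<and> le y z \<longrightarrow> le x z)"

definition comparable :: "('a \<Rightarrow> 'a \<Rightarrow> bool) \<Rightarrow> 'a \<Rightarrow> 'a \<Rightarrow> bool" where
  "comparable le x y \<longleftrightarrow> le x y \<or> le y x"

definition is_chain :: "('a \<Rightarrow> 'a \<Rightarrow> bool) \<Rightarrow> 'a set \<Rightarrow> bool" where
  "is_chain le C \<longleftrightarrow> (\<forall>x\<in>C. \<forall>y\<in>C. comparable le x y)"

definition is_antichain :: "('a \<Rightarrow> 'a \<Rightarrow> bool) \<Rightarrow> 'a set \<Rightarrow> bool" where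
  "is_antichain le A \<longleftrightarrow> (\<forall>x\<in>A. \<forall>y\<in>A. x \<noteq> y \<longrightarrow> \<not> comparable le x y)"

definition width :: "'a set \<Rightarrow> ('a \<Rightarrow> 'a \<Rightarrow> bool) \<Rightarrow> nat" where
  "width P le = Max (card ` {A. A \<subseteq> P \<and> is_antichain le A})"

definition contains_kk :: "'a set \<Rightarrow> ('a \<Rightarrow> 'a \<Rightarrow> bool) \<Rightarrow> nat \<Rightarrow> bool" where
  "contains_kk P le k \<longleftrightarrow>
     (\<exists>A B. A \<subseteq> P \<and> B \<subseteq> P \<and> A \<inter> B = {} \<and> card A = k \<and> card B = k \<and>
        is_chain le A \<and> is_chain le B \<and>
        (\<forall>a\<in>A. \<forall>b\<in>B. \<not> comparable le a b))"

fun ff_insert :: "('a \<Rightarrow> 'a \<Rightarrow> bool) \<Rightarrow> 'a \<Rightarrow> 'a set list \<Rightarrow> 'a set list" where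
  "ff_insert le v [] = [{v}]"
| "ff_insert le v (C # cs) =
     (if \<forall>u\<in>C. comparable le u v then insert v C # cs else C # ff_insert le v cs)"

definition first_fit :: "('a \<Rightarrow> 'a \<Rightarrow> bool) \<Rightarrow> 'a list \<Rightarrow> 'a set list" where
  "first_fit le xs = foldl (\<lambda>cs v. ff_insert le v cs) [] xs"

end

theory Submission
  imports Defs "HOL-Number_Theory.Cong"
begin

text \<open>Encode the number \<open>n\<close> as the point with level \<open>n div W\<close> in column \<open>n mod W\<close>; each
  column is a chain, and points of different columns are comparable only when their levels
  differ by more than \<open>D\<close>. A chain of \<open>k \<ge> D + 2\<close> elements spans more than \<open>D\<close> levels, so two
  such chains cannot be mutually incomparable, while the width is \<open>W\<close>. First-Fit is fed
  \<open>(D + 1)(W - 1)\<close> blocks: block \<open>(j, s)\<close> puts its \<open>t\<close>-th point on level \<open>t(D + 1) + j\<close> in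
  column \<open>(s + t) mod W\<close>. Points of one block are \<open>D + 1\<close> levels apart, hence form a chain, and
  every point of a block lies within \<open>D\<close> levels of, but in another column than, some point of
  each earlier block; so First-Fit opens a new chain for every block.\<close>

lemma length_ff_insert_ge: "length cs \<le> length (ff_insert le v cs)"
  by (induction cs) auto

lemma length_first_fit_append_ge: "length (first_fit le xs) \<le> length (first_fit le (xs @ ys))"
proof (induction ys rule: rev_induct)
  case (snoc y ys)
  then show ?case
    using length_ff_insert_ge[of "first_fit le (xs @ ys)" le y]
    by (simp add: first_fit_def)
qed simp

lemma ff_insert_opens_chain:
  "\<forall>C\<in>set cs. \<exists>u\<in>C. \<not> comparable le u v \<Longrightarrow> ff_insert le v cs = cs @ [{v}]"
  by (induction cs) auto

lemma ff_insert_into_last: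
  "\<forall>C\<in>set cs. \<exists>u\<in>C. \<not> comparable le u v \<Longrightarrow> \<forall>u\<in>S. comparable le u v \<Longrightarrow>
   ff_insert le v (cs @ [S]) = cs @ [insert v S]"
  by (induction cs) auto

lemma foldl_ff_insert_into_last:
  assumes "\<forall>v\<in>set L. \<forall>C\<in>set cs. \<exists>u\<in>C. \<not> comparable le u v"
    and "\<forall>u\<in>S \<union> set L. \<forall>v\<in>set L. comparable le u v"
  shows "foldl (\<lambda>cs v. ff_insert le v cs) (cs @ [S]) L = cs @ [S \<union> set L]"
  using assms
proof (induction L arbitrary: S)
  case (Cons v L)
  have "ff_insert le v (cs @ [S]) = cs @ [insert v S]"
    using Cons.prems by (intro ff_insert_into_last) auto
  moreover have "foldl (\<lambda>cs v. ff_insert le v cs) (cs @ [insert v S]) L = cs @ [insert v S \<union> set L]"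
    using Cons.prems by (intro Cons.IH) auto
  ultimately show ?case by simp
qed simp

lemma foldl_ff_insert_new_chain:
  assumes "L \<noteq> []" and "\<forall>v\<in>set L. \<forall>C\<in>set cs. \<exists>u\<in>C. \<not> comparable le u v"
    and "is_chain le (set L)"
  shows "foldl (\<lambda>cs v. ff_insert le v cs) cs L = cs @ [set L]"
proof -
  obtain v L' where L: "L = v # L'" using \<open>L \<noteq> []\<close> by (cases L) auto
  have "ff_insert le v cs = cs @ [{v}]"
    using assms(2) L by (intro ff_insert_opens_chain) auto
  moreover have "foldl (\<lambda>cs v. ff_insert le v cs) (cs @ [{v}]) L' = cs @ [{v} \<union> set L']"
    using assms L by (intro foldl_ff_insert_into_last) (auto simp: is_chain_def)
  ultimately show ?thesis using L by simp
qed

lemma first_fit_concat_blocks: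
  assumes "\<And>i. i < M \<Longrightarrow> B i \<noteq> []"
    and "\<And>i. i < M \<Longrightarrow> is_chain le (set (B i))"
    and "\<And>i i' v. i < M \<Longrightarrow> i' < i \<Longrightarrow> v \<in> set (B i) \<Longrightarrow> \<exists>u\<in>set (B i'). \<not> comparable le u v"
  shows "first_fit le (concat (map B [0..<M])) = map (set \<circ> B) [0..<M]"
  using assms
proof (induction M)
  case 0
  then show ?case by (simp add: first_fit_def)
next
  case (Suc M)
  have IH: "first_fit le (concat (map B [0..<M])) = map (set \<circ> B) [0..<M]"
    by (rule Suc.IH) (meson Suc.prems less_SucI)+
  have "first_fit le (concat (map B [0..<Suc M])) =
        foldl (\<lambda>cs v. ff_insert le v cs) (map (set \<circ> B) [0..<M]) (B M)"
    by (simp add: first_fit_def IH[symmetric])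
  also have "\<dots> = map (set \<circ> B) [0..<M] @ [set (B M)]"
    by (rule foldl_ff_insert_new_chain) (use Suc.prems(1,2) Suc.prems(3)[of M] in auto)
  finally show ?case by simp
qed

lemma distinct_concat_blocks:
  assumes "\<And>c. c < M \<Longrightarrow> distinct (B c)"
    and "\<And>c c' x. c < M \<Longrightarrow> c' < M \<Longrightarrow> x \<in> set (B c) \<Longrightarrow> x \<in> set (B c') \<Longrightarrow> c = c'"
  shows "distinct (concat (map B [0..<M]))"
  using assms
proof (induction M)
  case (Suc M)
  have "distinct (concat (map B [0..<M]))"
    by (rule Suc.IH) (use Suc.prems in auto)
  moreover have "x \<notin> set (B c)" if "x \<in> set (B M)" and "c < M" for x c
    using Suc.prems(2)[of M c x] that by auto
  ultimately show ?case using Suc.prems(1)[of M] by auto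
qed simp

lemma card_nat_set_spread:
  assumes "finite (S :: nat set)" and "card S = k" and "0 < k"
  shows "\<exists>x\<in>S. \<exists>y\<in>S. x + (k - 1) \<le> y"
proof -
  have "S \<noteq> {}" using assms by auto
  have "k \<le> card {Min S..Max S}"
    using assms \<open>S \<noteq> {}\<close> by (intro card_mono[of _ S, unfolded \<open>card S = k\<close>]) auto
  then show ?thesis
    using assms \<open>S \<noteq> {}\<close> by (intro bexI[of _ "Min S"] bexI[of _ "Max S"]) auto
qed

lemma div_mod_eq_imp_eq: "(n :: nat) div W = m div W \<Longrightarrow> n mod W = m mod W \<Longrightarrow> n = m"
  by (metis div_mult_mod_eq)

lemma mod_add_right_cancel_less:
  "(s :: nat) < W \<Longrightarrow> s' < W \<Longrightarrow> (s + t) mod W = (s' + t) mod W \<Longrightarrow> s = s'"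
  by (metis cong_add_rcancel_nat cong_def mod_less)

definition column_le :: "nat \<Rightarrow> nat \<Rightarrow> nat \<Rightarrow> nat \<Rightarrow> bool" where
  "column_le W D n m \<longleftrightarrow> (n mod W = m mod W \<and> n div W \<le> m div W) \<or> n div W + D < m div W"

lemma incomparable_column_le_iff:
  "\<not> comparable (column_le W D) n m \<longleftrightarrow>
     n mod W \<noteq> m mod W \<and> n div W \<le> m div W + D \<and> m div W \<le> n div W + D"
  unfolding comparable_def column_le_def by auto

lemma poset_on_column_le: "poset_on P (column_le W D)"
  unfolding poset_on_def column_le_def by (auto intro: div_mod_eq_imp_eq)

lemma width_column_le:
  assumes "0 < W" and "0 < N"
  shows "width {..<N * W} (column_le W D) = W"
  unfolding width_def
proof (rule Max_eqI)
  show "finite (card ` {A. A \<subseteq> {..<N * W} \<and> is_antichain (column_le W D) A})"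
    by (auto intro: finite_subset[of _ "Pow {..<N * W}"])
next
  fix y assume "y \<in> card ` {A. A \<subseteq> {..<N * W} \<and> is_antichain (column_le W D) A}"
  then obtain A where A: "is_antichain (column_le W D) A" "y = card A" by auto
  have "inj_on (\<lambda>n. n mod W) A"
    using A(1) by (auto intro!: inj_onI simp: is_antichain_def incomparable_column_le_iff)
  then have "card A \<le> card {..<W}"
    using \<open>0 < W\<close> by (intro card_inj_on_le[of _ _ "{..<W}"]) auto
  then show "y \<le> W" using A by simp
next
  have "{..<W} \<subseteq> {..<N * W}" using \<open>0 < N\<close> by (auto intro: less_le_trans)
  moreover have "is_antichain (column_le W D) {..<W}"
    by (auto simp: is_antichain_def incomparable_column_le_iff)
  ultimately show "W \<in> card ` {A. A \<subseteq> {..<N * W} \<and> is_antichain (column_le W D) A}"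
    by (intro image_eqI[of _ _ "{..<W}"]) auto
qed

lemma chain_column_le_spread:
  assumes "is_chain (column_le W D) A" and "card A = k" and "0 < k"
  shows "\<exists>a\<in>A. \<exists>a'\<in>A. a div W + (k - 1) \<le> a' div W"
proof -
  have "inj_on (\<lambda>n. n div W) A"
  proof (rule inj_onI)
    fix n m assume "n \<in> A" "m \<in> A" and same_level: "n div W = m div W"
    then have "comparable (column_le W D) n m"
      using assms(1) by (simp add: is_chain_def)
    with same_level have "n mod W = m mod W"
      by (auto simp: comparable_def column_le_def)
    with same_level show "n = m" by (rule div_mod_eq_imp_eq)
  qed
  then have "card ((\<lambda>n. n div W) ` A) = k" and "finite A"
    using assms by (auto simp: card_image intro: card_ge_0_finite)
  then show ?thesis using card_nat_set_spread[of "(\<lambda>n. n div W) ` A" k] \<open>0 < k\<close> by auto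
qed

lemma not_contains_kk_column_le:
  assumes "D + 2 \<le> k"
  shows "\<not> contains_kk P (column_le W D) k"
proof
  assume "contains_kk P (column_le W D) k"
  then obtain A B where "card A = k" "card B = k"
    and chains: "is_chain (column_le W D) A" "is_chain (column_le W D) B"
    and incomparable: "\<forall>a\<in>A. \<forall>b\<in>B. \<not> comparable (column_le W D) a b"
    unfolding contains_kk_def by blast
  obtain a a' where "a \<in> A" "a' \<in> A" "a div W + (k - 1) \<le> a' div W"
    using chain_column_le_spread[OF chains(1) \<open>card A = k\<close>] assms by auto
  moreover obtain b b' where "b \<in> B" "b' \<in> B" "b div W + (k - 1) \<le> b' div W"
    using chain_column_le_spread[OF chains(2) \<open>card B = k\<close>] assms by auto
  ultimately have "a' div W \<le> b div W + D" and "b' div W \<le> a div W + D"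
    using incomparable by (auto simp: incomparable_column_le_iff)
  with \<open>a div W + (k - 1) \<le> a' div W\<close> \<open>b div W + (k - 1) \<le> b' div W\<close> assms show False
    by linarith
qed

definition grid_point :: "nat \<Rightarrow> nat \<Rightarrow> nat \<Rightarrow> nat \<Rightarrow> nat \<Rightarrow> nat" where
  "grid_point W D j s t = (t * (D + 1) + j) * W + (s + t) mod W"

lemma grid_point_div: "0 < W \<Longrightarrow> grid_point W D j s t div W = t * (D + 1) + j"
  unfolding grid_point_def by simp

lemma grid_point_mod: "0 < W \<Longrightarrow> grid_point W D j s t mod W = (s + t) mod W"
  unfolding grid_point_def by simp

lemma grid_point_inj:
  assumes "0 < W" and "j \<le> D" "s < W" and "j' \<le> D" "s' < W"
    and "grid_point W D j s t = grid_point W D j' s' t'"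
  shows "j = j' \<and> s = s' \<and> t = t'"
proof -
  have levels: "t * (D + 1) + j = t' * (D + 1) + j'"
    using arg_cong[OF assms(6), of "\<lambda>n. n div W"] \<open>0 < W\<close> by (simp add: grid_point_div)
  have level_div: "(u * (D + 1) + i) div (D + 1) = u" if "i \<le> D" for u i
    using that by (metis Suc_eq_plus1 add.commute add_cancel_left_right div_less
      div_mult_self1 less_eq_iff_succ_less nat.simps(3))
  have "t = t'"
    using level_div[OF \<open>j \<le> D\<close>, of t] level_div[OF \<open>j' \<le> D\<close>, of t'] levels by simp
  moreover have "(s + t) mod W = (s' + t) mod W"
    using arg_cong[OF assms(6), of "\<lambda>n. n mod W"] \<open>0 < W\<close> \<open>t = t'\<close> by (simp add: grid_point_mod)
  with \<open>s < W\<close> \<open>s' < W\<close> have "s = s'" by (rule mod_add_right_cancel_less)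
  ultimately show ?thesis using levels by simp
qed

lemma grid_point_less:
  assumes "0 < W" and "j \<le> D" and "t \<le> D - j"
  shows "grid_point W D j s t < (D + 1) * (D + 1) * W"
proof -
  have "t * (D + 1) + j \<le> (t + j) * (D + 1)"
    by (simp add: algebra_simps)
  also have "\<dots> \<le> D * (D + 1)"
    using assms(2,3) by (intro mult_right_mono) auto
  also have "\<dots> < (D + 1) * (D + 1)"
    by simp
  finally have "t * (D + 1) + j + 1 \<le> (D + 1) * (D + 1)"
    by simp
  then have "(t * (D + 1) + j + 1) * W \<le> (D + 1) * (D + 1) * W"
    by (rule mult_right_mono) simp
  moreover have "grid_point W D j s t < (t * (D + 1) + j + 1) * W"
    using mod_less_divisor[OF \<open>0 < W\<close>, of "s + t"] by (simp add: grid_point_def)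
  ultimately show ?thesis by linarith
qed

lemma grid_points_comparable:
  assumes "0 < W"
  shows "comparable (column_le W D) (grid_point W D j s t) (grid_point W D j s t')"
proof -
  consider "t = t'" | "t + 1 \<le> t'" | "t' + 1 \<le> t" by linarith
  then show ?thesis
  proof cases
    case 2
    then have "(t + 1) * (D + 1) \<le> t' * (D + 1)" by (intro mult_right_mono) auto
    then show ?thesis using assms by (simp add: comparable_def column_le_def grid_point_div)
  next
    case 3
    then have "(t' + 1) * (D + 1) \<le> t * (D + 1)" by (intro mult_right_mono) auto
    then show ?thesis using assms by (simp add: comparable_def column_le_def grid_point_div)
  qed (simp add: comparable_def column_le_def)
qed

text \<open>If the \<open>t\<close>-th points of both blocks share a column, then \<open>s' = s\<close> and \<open>j' < j\<close>, so the
  \<open>(t + 1)\<close>-th point of block \<open>(j', s')\<close> moves to the next column yet stays within \<open>D\<close> levels.\<close>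

lemma grid_point_incomparable_to_earlier_block:
  assumes "2 \<le> W" and "j \<le> D" and "s < W" "s' < W" and "t \<le> D - j"
    and earlier: "j' < j \<or> (j' = j \<and> s' \<noteq> s)"
  shows "\<exists>t' \<le> D - j'. \<not> comparable (column_le W D) (grid_point W D j' s' t') (grid_point W D j s t)"
proof -
  have "0 < W" using \<open>2 \<le> W\<close> by simp
  have incomparable_iff: "\<not> comparable (column_le W D) (grid_point W D j' s' t') (grid_point W D j s t)
      \<longleftrightarrow> (s' + t') mod W \<noteq> (s + t) mod W \<and> t' * (D + 1) + j' \<le> t * (D + 1) + j + D
          \<and> t * (D + 1) + j \<le> t' * (D + 1) + j' + D" for t'
    using \<open>0 < W\<close> by (simp add: incomparable_column_le_iff grid_point_div grid_point_mod)
  show ?thesis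
  proof (cases "(s' + t) mod W = (s + t) mod W")
    case False
    with earlier assms show ?thesis by (intro exI[of _ t]) (auto simp: incomparable_iff)
  next
    case True
    with \<open>s' < W\<close> \<open>s < W\<close> have "s' = s" by (rule mod_add_right_cancel_less)
    with earlier have "j' < j" by simp
    have "(s' + (t + 1)) mod W \<noteq> (s + t) mod W"
      using True \<open>2 \<le> W\<close> by (simp add: mod_Suc)
    with \<open>j' < j\<close> assms show ?thesis
      by (intro exI[of _ "t + 1"]) (auto simp: incomparable_iff)
  qed
qed

text \<open>Block \<open>c\<close> is block \<open>(j, s) = (c div (W - 1), c mod (W - 1))\<close>, so blocks are presented in
  lexicographic order of \<open>(j, s)\<close>.\<close>

definition ff_block :: "nat \<Rightarrow> nat \<Rightarrow> nat \<Rightarrow> nat list" where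
  "ff_block W D c = map (grid_point W D (c div (W - 1)) (c mod (W - 1))) [0..<D - c div (W - 1) + 1]"

definition ff_order :: "nat \<Rightarrow> nat \<Rightarrow> nat list" where
  "ff_order W D = concat (map (ff_block W D) [0..<(D + 1) * (W - 1)])"

lemma mem_ff_block_iff:
  "v \<in> set (ff_block W D c) \<longleftrightarrow>
     (\<exists>t \<le> D - c div (W - 1). v = grid_point W D (c div (W - 1)) (c mod (W - 1)) t)"
  unfolding ff_block_def set_map set_upt by (force simp: less_Suc_eq_le)

lemma block_index_bounds:
  assumes "2 \<le> W" and "c < (D + 1) * (W - 1)"
  shows "c div (W - 1) \<le> (D :: nat)" and "c mod (W - 1) < W"
proof -
  show "c div (W - 1) \<le> D"
    using less_mult_imp_div_less[of c "D + 1" "W - 1"] assms by (simp add: mult.commute)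
  show "c mod (W - 1) < W"
    using mod_less_divisor[of "W - 1" c] assms by linarith
qed

lemma less_imp_div_less_or_mod_neq:
  assumes "(c' :: nat) < c"
  shows "c' div q < c div q \<or> (c' div q = c div q \<and> c' mod q \<noteq> c mod q)"
  using assms div_le_mono[of c' c q] div_mod_eq_imp_eq[of c' q c] by fastforce

lemma length_first_fit_ff_order:
  assumes "2 \<le> W"
  shows "length (first_fit (column_le W D) (ff_order W D)) = (D + 1) * (W - 1)"
proof -
  have "first_fit (column_le W D) (ff_order W D) = map (set \<circ> ff_block W D) [0..<(D + 1) * (W - 1)]"
    unfolding ff_order_def
  proof (rule first_fit_concat_blocks)
    show "is_chain (column_le W D) (set (ff_block W D c))" for c
      using assms by (auto simp: is_chain_def mem_ff_block_iff grid_points_comparable)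
  next
    fix c c' v
    assume c: "c < (D + 1) * (W - 1)" "c' < c" and "v \<in> set (ff_block W D c)"
    then obtain t where t: "t \<le> D - c div (W - 1)" "v = grid_point W D (c div (W - 1)) (c mod (W - 1)) t"
      by (auto simp: mem_ff_block_iff)
    have "c' < (D + 1) * (W - 1)" using c by simp
    then obtain t' where "t' \<le> D - c' div (W - 1)"
      and "\<not> comparable (column_le W D) (grid_point W D (c' div (W - 1)) (c' mod (W - 1)) t') v"
      using grid_point_incomparable_to_earlier_block[OF assms block_index_bounds[OF assms c(1)]
          block_index_bounds(2)[OF assms] t(1) less_imp_div_less_or_mod_neq[OF c(2)]] t(2)
      by blast
    then show "\<exists>u\<in>set (ff_block W D c'). \<not> comparable (column_le W D) u v"
      using mem_ff_block_iff[of _ W D c'] by blast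
  next
    show "ff_block W D c \<noteq> []" for c by (simp add: ff_block_def)
  qed
  then show ?thesis by (simp only: length_map length_upt diff_zero)
qed

lemma distinct_ff_order:
  assumes "2 \<le> W"
  shows "distinct (ff_order W D)"
  unfolding ff_order_def
proof (rule distinct_concat_blocks)
  fix c assume "c < (D + 1) * (W - 1)"
  note bounds = block_index_bounds[OF assms this]
  have "inj_on (grid_point W D (c div (W - 1)) (c mod (W - 1))) UNIV"
  proof (rule inj_onI)
    fix t t' assume "grid_point W D (c div (W - 1)) (c mod (W - 1)) t
        = grid_point W D (c div (W - 1)) (c mod (W - 1)) t'"
    from grid_point_inj[OF _ bounds bounds this] assms
    show "t = t'" by linarith
  qed
  then show "distinct (ff_block W D c)"
    unfolding ff_block_def distinct_map using distinct_upt inj_on_subset by blast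
next
  fix c c' x
  assume c: "c < (D + 1) * (W - 1)" "c' < (D + 1) * (W - 1)"
    and "x \<in> set (ff_block W D c)" "x \<in> set (ff_block W D c')"
  then obtain t t' where "grid_point W D (c div (W - 1)) (c mod (W - 1)) t
      = grid_point W D (c' div (W - 1)) (c' mod (W - 1)) t'"
    unfolding mem_ff_block_iff by metis
  from grid_point_inj[OF _ block_index_bounds[OF assms c(1)] block_index_bounds[OF assms c(2)] this] assms
  have "c div (W - 1) = c' div (W - 1)" and "c mod (W - 1) = c' mod (W - 1)"
    by simp_all
  then show "c = c'" by (rule div_mod_eq_imp_eq)
qed

lemma set_ff_order_subset:
  assumes "2 \<le> W"
  shows "set (ff_order W D) \<subseteq> {..<(D + 1) * (D + 1) * W}"
  using grid_point_less block_index_bounds[OF assms] assms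
  by (auto simp: ff_order_def mem_ff_block_iff)

theorem theorem6:
  fixes k w :: nat
  assumes "k \<ge> 2" and "w \<ge> 2"
  shows "\<exists>(P :: nat set) (le :: nat \<Rightarrow> nat \<Rightarrow> bool) (xs :: nat list).
           finite P \<and> poset_on P le \<and> width P le = w \<and> \<not> contains_kk P le k \<and>
           distinct xs \<and> set xs = P \<and>
           length (first_fit le xs) \<ge> (k - 1) * (w - 1)"
proof -
  define D where "D = k - 2"
  define P where "P = {..<(D + 1) * (D + 1) * w}"
  define xs where "xs = ff_order w D @ filter (\<lambda>n. n \<notin> set (ff_order w D)) [0..<(D + 1) * (D + 1) * w]"
  have "set xs = P" and "distinct xs"
    using set_ff_order_subset[OF \<open>w \<ge> 2\<close>] distinct_ff_order[OF \<open>w \<ge> 2\<close>]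
    by (auto simp: xs_def P_def)
  have "k - 1 = D + 1" using \<open>k \<ge> 2\<close> by (simp add: D_def)
  then have "(k - 1) * (w - 1) = length (first_fit (column_le w D) (ff_order w D))"
    using length_first_fit_ff_order[OF \<open>w \<ge> 2\<close>] by simp
  also have "\<dots> \<le> length (first_fit (column_le w D) xs)"
    unfolding xs_def by (rule length_first_fit_append_ge)
  finally have "(k - 1) * (w - 1) \<le> length (first_fit (column_le w D) xs)" .
  moreover have "width P (column_le w D) = w"
    using width_column_le[of w "(D + 1) * (D + 1)" D] \<open>w \<ge> 2\<close> by (simp add: P_def)
  moreover have "\<not> contains_kk P (column_le w D) k"
    using \<open>k \<ge> 2\<close> by (intro not_contains_kk_column_le) (simp add: D_def)
  ultimately show ?thesis
    using \<open>set xs = P\<close> \<open>distinct xs\<close> poset_on_column_le unfolding P_def by blast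
qed

end
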